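(* The typical subranks of real $3\times3\times5$ tensors are exactly $2$ and $3$.
   Context: For $r \geq 0$ let $I_r := \sum_{j=1}^r e_j \otimes e_j \otimes e_j$. The subrank of $T \in \mathbb{R}^{n_1} \otimes \mathbb{R}^{n_2} \otimes \mathbb{R}^{n_3}$ is $Q(T) := \max\{ r \mid \exists\ \mathbb{R}\text{-linear } \varphi_i : \mathbb{R}^{n_i} \to \mathbb{R}^r,\ (\varphi_1 \otimes \varphi_2 \otimes \varphi_3) T = I_r\}$. An integer $r$ is a typical subrank of the format $n_1\times n_2\times n_3$ if $\{T \mid Q(T) = r\}$ contains a nonempty Euclidean-open subset of $\mathbb{R}^{n_1} \otimes \mathbb{R}^{n_2} \otimes \mathbb{R}^{n_3}$. *)

theory Defs
  imports "HOL-Analysis.Analysis"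
begin

text \<open>A real tensor of format n1 x n2 x n3 is an element T :: real^'c^'b^'a with
  CARD('a) = n1, CARD('b) = n2, CARD('c) = n3; its entries are T$i$j$k.
  This is a Euclidean space, so "open" is the Euclidean topology.
  An R-linear map R^n -> R^r is given by its r x n matrix, represented as
  a function M :: nat => 'a => real with rows indexed by a < r.\<close>

definition apply3 ::
  "(nat \<Rightarrow> 'a::finite \<Rightarrow> real) \<Rightarrow> (nat \<Rightarrow> 'b::finite \<Rightarrow> real) \<Rightarrow> (nat \<Rightarrow> 'c::finite \<Rightarrow> real)
   \<Rightarrow> real^'c^'b^'a \<Rightarrow> nat \<Rightarrow> nat \<Rightarrow> nat \<Rightarrow> real" where
  "apply3 A B C T a b c = (\<Sum>i\<in>UNIV. \<Sum>j\<in>UNIV. \<Sum>k\<in>UNIV. A a i * B b j * C c k * T$i$j$k)"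

definition unit_tensor :: "nat \<Rightarrow> nat \<Rightarrow> nat \<Rightarrow> real" where
  "unit_tensor a b c = (if a = b \<and> b = c then 1 else 0)"

definition subrank :: "real^'c::finite^'b::finite^'a::finite \<Rightarrow> nat" where
  "subrank T = Max {r. \<exists>A B C. \<forall>a<r. \<forall>b<r. \<forall>c<r.
                     apply3 A B C T a b c = unit_tensor a b c}"

definition typical_subrank :: "(real^'c::finite^'b::finite^'a::finite) itself \<Rightarrow> nat \<Rightarrow> bool" where
  "typical_subrank _ r \<longleftrightarrow>
     (\<exists>U :: (real^'c^'b^'a) set. open U \<and> U \<noteq> {} \<and> (\<forall>T\<in>U. subrank T = r))"

end

theory Submission
  imports Defs
begin

(* The subrank is at most 3, the first dimension. It is at least 2 on an open dense set: whenever
   a 4 x 4 flattening of a 2 x 2 x 4 subtensor is invertible, a suitable third factor produces I_2,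
   and invertibility of that flattening is an open dense condition.
   Subrank 3 is attained on an open set: at the tensor T3 the map (A, B, C) |-> (A (x) B (x) C) T3
   takes the value I_3 with surjective differential, so by the open mapping theorem solutions
   persist for all nearby tensors.
   Subrank 2 is attained near T2: a restriction of a 3 x 3 x 5 tensor to I_3 yields a nonzero
   rank-one matrix u v^T in the span of its slices. For rank-one matrices the four linear forms of
   the quaternion product (u1 + u2 i + u3 j)(v1 + v2 i + v3 j) carry the whole squared Frobenius
   norm (Euler's four-square identity), whereas they vanish on the slice span of T2; hence slice
   spans close to that of T2 contain no rank-one matrix. *)

lemma bounded_linear_axis: "bounded_linear (axis i :: 'b::real_normed_vector \<Rightarrow> 'b^'i::finite)"
proof (rule bounded_linear_intro[where K=1])
  show "axis i (x + y) = axis i x + axis i y" for x y :: 'b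
    by (simp add: vec_eq_iff axis_def)
  show "axis i (r *\<^sub>R x) = r *\<^sub>R axis i x" for r and x :: 'b
    by (simp add: vec_eq_iff axis_def)
  show "norm (axis i x) \<le> norm x * 1" for x :: 'b
  proof -
    have "(\<Sum>j\<in>UNIV. (norm (axis i x $ j))\<^sup>2) = (norm x)\<^sup>2"
      by (simp add: axis_def if_distrib[of "\<lambda>v. (norm v)\<^sup>2"] cong: if_cong)
    then show ?thesis
      by (simp add: norm_vec_def L2_set_def)
  qed
qed

lemma has_derivative_vec_lambda:
  fixes f :: "'a::real_normed_vector \<Rightarrow> 'i::finite \<Rightarrow> 'b::real_normed_vector"
  assumes "\<And>i. ((\<lambda>x. f x i) has_derivative (\<lambda>h. f' h i)) F"
  shows "((\<lambda>x. \<chi> i. f x i) has_derivative (\<lambda>h. \<chi> i. f' h i)) F"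
proof -
  have vec_as_sum: "(\<chi> i. g i) = (\<Sum>i\<in>UNIV. axis i (g i))" for g :: "'i \<Rightarrow> 'b"
    by (simp add: vec_eq_iff axis_def sum_component if_distrib cong: if_cong)
  show ?thesis
    unfolding vec_as_sum
    by (intro has_derivative_sum bounded_linear.has_derivative[OF bounded_linear_axis] assms)
qed

lemma has_derivative_vec_nth [derivative_intros]:
  "(f has_derivative f') F \<Longrightarrow> ((\<lambda>x. f x $ i) has_derivative (\<lambda>h. f' h $ i)) F"
  by (rule bounded_linear.has_derivative[OF bounded_linear_vec_nth])

lemma surj_fst_pair_linear:
  assumes lin: "linear G'" and surj: "surj (\<lambda>dp. G' (0, dp))"
  shows "surj (\<lambda>h. (fst h, G' h))"
  unfolding surj_def
proof
  fix y
  obtain dp where "G' (0, dp) = snd y - G' (fst y, 0)"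
    using surj by (metis surjD)
  moreover have "G' (fst y, dp) = G' (fst y, 0) + G' (0, dp)"
    using linear_add[OF lin, of "(fst y, 0)" "(0, dp)"] by simp
  ultimately have "G' (fst y, dp) = snd y"
    by simp
  then show "\<exists>h. y = (fst h, G' h)"
    by (intro exI[of _ "(fst y, dp)"]) simp
qed

(* Sussmann's open mapping theorem, applied to (t, p) |-> (t, G (t, p)). *)
lemma solvable_near_regular_point:
  fixes G :: "'t::euclidean_space \<times> 'p::euclidean_space \<Rightarrow> 'y::euclidean_space"
  assumes cont: "continuous_on UNIV G"
    and deriv: "(G has_derivative G') (at (t0, p0))"
    and surj: "surj (\<lambda>dp. G' (0, dp))"
    and solution: "G (t0, p0) = y0"
  shows "\<exists>U. open U \<and> t0 \<in> U \<and> (\<forall>t\<in>U. \<exists>p. G (t, p) = y0)"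
proof -
  define f where "f x = (fst x, G x)" for x
  define f' where "f' h = (fst h, G' h)" for h
  have "(f has_derivative f') (at (t0, p0))"
    unfolding f_def f'_def by (intro has_derivative_Pair has_derivative_fst[OF has_derivative_ident] deriv)
  have lin: "linear G'"
    using deriv has_derivative_linear by blast
  have "linear f'"
    using lin unfolding f'_def by (auto simp: linear_iff)
  moreover have "surj f'"
    unfolding f'_def by (rule surj_fst_pair_linear[OF lin surj])
  ultimately obtain g' where g': "linear g'" "f' \<circ> g' = id"
    using real_vector.linear_surjective_right_inverse by blast
  have "f (t0, p0) \<in> interior (range f)"
  proof (rule sussmann_open_mapping[OF open_UNIV _ _ \<open>(f has_derivative f') _\<close>])
    show "continuous_on UNIV f"
      unfolding f_def by (intro continuous_intros cont)
    show "bounded_linear g'"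
      using g'(1) linear_conv_bounded_linear by blast
  qed (use g' in auto)
  then obtain e where "e > 0" and e: "ball (t0, y0) e \<subseteq> range f"
    unfolding mem_interior f_def using solution by auto
  show ?thesis
  proof (intro exI[of _ "ball t0 e"] conjI ballI)
    fix t
    assume "t \<in> ball t0 e"
    then have "(t, y0) \<in> range f"
      using e by (auto simp: dist_Pair_Pair dist_commute)
    then obtain x where "(t, y0) = f x"
      by blast
    then have "x = (t, snd x)" "G x = y0"
      by (simp_all add: f_def prod_eq_iff)
    then show "\<exists>p. G (t, p) = y0"
      by metis
  qed (use \<open>e > 0\<close> in auto)
qed

lemma det_shift_is_poly:
  fixes M :: "real^'n::finite^'n"
  obtains P where "\<And>t. det (M + t *\<^sub>R mat 1) = poly P t"
proof
  let ?P = "\<Sum>p\<in>{p. p permutes (UNIV :: 'n set)}. smult (of_int (sign p))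
      (\<Prod>i\<in>UNIV. [:M$i$p i, if i = p i then 1 else 0:])"
  show "det (M + t *\<^sub>R mat 1) = poly ?P t" for t
    unfolding det_def poly_sum poly_smult poly_prod
    by (intro sum.cong refl arg_cong2[where f="(*)"] prod.cong) (auto simp: mat_def)
qed

lemma invertible_large_shift:
  fixes M :: "real^'n::finite^'n"
  obtains t where "invertible (M + t *\<^sub>R mat 1)"
proof -
  obtain K where K: "\<And>x. norm (M *v x) \<le> norm x * K"
    using bounded_linear.bounded[OF matrix_vector_mul_bounded_linear] by blast
  have "x = 0" if "(M + (\<bar>K\<bar> + 1) *\<^sub>R mat 1) *v x = 0" for x
  proof -
    have "M *v x + (\<bar>K\<bar> + 1) *\<^sub>R x = 0"
      using that by (simp add: matrix_vector_mult_add_rdistrib flip: scaleR_matrix_vector_assoc)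
    then have "M *v x = - ((\<bar>K\<bar> + 1) *\<^sub>R x)"
      by (simp add: eq_neg_iff_add_eq_0)
    then have "(\<bar>K\<bar> + 1) * norm x \<le> norm x * K"
      using K[of x] by simp
    then have "norm x * (\<bar>K\<bar> + 1 - K) \<le> 0"
      by (simp add: algebra_simps)
    moreover have "\<bar>K\<bar> + 1 - K > 0"
      by linarith
    ultimately show "x = 0"
      by (simp add: mult_le_0_iff)
  qed
  then show ?thesis
    using that unfolding invertible_left_inverse matrix_left_invertible_ker by blast
qed

lemma invertible_small_shift:
  fixes M :: "real^'n::finite^'n"
  assumes "d > 0"
  obtains t where "0 < t" "t < d" "invertible (M + t *\<^sub>R mat 1)"
proof -
  obtain P where P: "\<And>t. det (M + t *\<^sub>R mat 1) = poly P t"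
    using det_shift_is_poly by blast
  obtain t0 where "invertible (M + t0 *\<^sub>R mat 1)"
    using invertible_large_shift by blast
  then have "P \<noteq> 0"
    using P invertible_det_nz by force
  then have "finite {t. poly P t = 0}"
    by (rule poly_roots_finite)
  moreover have "infinite {0<..<d}"
    using assms by simp
  ultimately obtain t where "t \<in> {0<..<d}" "poly P t \<noteq> 0"
    by (metis (mono_tags, lifting) finite_subset mem_Collect_eq subsetI)
  then show ?thesis
    by (intro that[of t]) (auto simp: invertible_det_nz P)
qed

lemma matrix_add_rdistrib: "(A + B) ** C = A ** C + B ** C"
  by (simp add: matrix_matrix_mult_def vec_eq_iff algebra_simps sum.distrib)

lemma matrix_mul_sum_left: "(\<Sum>z\<in>Z. M z) ** Q = (\<Sum>z\<in>Z. M z ** Q)"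
  by (induction Z rule: infinite_finite_induct) (simp_all add: matrix_add_rdistrib)

lemma matrix_mul_sum_right: "P ** (\<Sum>z\<in>Z. M z) = (\<Sum>z\<in>Z. P ** M z)"
  by (induction Z rule: infinite_finite_induct) (simp_all add: matrix_add_ldistrib)

lemma matrix_mul_outer:
  fixes P :: "real^'n::finite^'m::finite" and Q :: "real^'q::finite^'p::finite"
  shows "P ** (\<chi> i j. u$i * v$j) ** Q = (\<chi> i j. (P *v u)$i * (v v* Q)$j)"
  by (simp add: vec_eq_iff matrix_matrix_mult_def matrix_vector_mult_def vector_matrix_mult_def
      sum_distrib_left sum_distrib_right mult_ac)

lemma abs_nth3_diff_le_dist:
  fixes T S :: "real^'c::finite^'b::finite^'a::finite"
  shows "\<bar>T$i$j$k - S$i$j$k\<bar> \<le> dist T S"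
proof -
  have "\<bar>(T - S)$i$j$k\<bar> \<le> norm ((T - S)$i$j)"
    by (rule component_le_norm_cart)
  also have "\<dots> \<le> norm ((T - S)$i)"
    by (rule Finite_Cartesian_Product.norm_nth_le)
  also have "\<dots> \<le> norm (T - S)"
    by (rule Finite_Cartesian_Product.norm_nth_le)
  finally show ?thesis
    by (simp add: dist_norm)
qed

lemma card_le_DIM_if_biorthogonal:
  fixes v g :: "'i \<Rightarrow> 'a::euclidean_space"
  assumes "finite I" and biorth: "\<And>a b. a \<in> I \<Longrightarrow> b \<in> I \<Longrightarrow> v a \<bullet> g b = (if a = b then 1 else 0)"
  shows "card I \<le> DIM('a)"
proof -
  have inj: "inj_on v I"
  proof (rule inj_onI)
    fix a a'
    assume "a \<in> I" "a' \<in> I" "v a = v a'"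
    then have "v a' \<bullet> g a = 1" and "v a' \<bullet> g a = (if a' = a then 1 else 0)"
      using biorth[of a a] biorth[of a' a] by simp_all
    then show "a = a'"
      by (metis zero_neq_one)
  qed
  have "independent (v ` I)"
  proof
    assume "dependent (v ` I)"
    then obtain u where "\<exists>x\<in>v ` I. u x \<noteq> 0" and u: "(\<Sum>x\<in>v ` I. u x *\<^sub>R x) = 0"
      using real_vector.dependent_finite[of "v ` I"] \<open>finite I\<close> by auto
    then obtain b where "b \<in> I" "u (v b) \<noteq> 0"
      by auto
    have "0 = (\<Sum>x\<in>v ` I. u x *\<^sub>R x) \<bullet> g b"
      by (simp add: u)
    also have "\<dots> = (\<Sum>a\<in>I. u (v a) * (v a \<bullet> g b))"
      by (simp add: inner_sum_left sum.reindex[OF inj])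
    also have "\<dots> = (\<Sum>a\<in>I. if a = b then u (v a) else 0)"
      by (intro sum.cong) (simp_all add: biorth \<open>b \<in> I\<close>)
    also have "\<dots> = u (v b)"
      using \<open>b \<in> I\<close> \<open>finite I\<close> by simp
    finally show False
      using \<open>u (v b) \<noteq> 0\<close> by simp
  qed
  then have "card (v ` I) \<le> DIM('a)"
    using independent_bound by blast
  then show ?thesis
    using card_image[OF inj] by simp
qed

section \<open>Restrictions to unit tensors\<close>

definition restricts_to_unit :: "real^'c::finite^'b::finite^'a::finite \<Rightarrow> nat \<Rightarrow> bool" where
  "restricts_to_unit T r \<longleftrightarrow>
     (\<exists>A B C. \<forall>a<r. \<forall>b<r. \<forall>c<r. apply3 A B C T a b c = unit_tensor a b c)"

lemma subrank_eq_Max: "subrank T = Max {r. restricts_to_unit T r}"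
  by (simp add: subrank_def restricts_to_unit_def)

lemma restricts_to_unit_le_card:
  fixes T :: "real^'c::finite^'b::finite^'a::finite"
  assumes "restricts_to_unit T r"
  shows "r \<le> CARD('a)"
proof -
  obtain A B C where ABC: "\<And>a b c. a < r \<Longrightarrow> b < r \<Longrightarrow> c < r \<Longrightarrow> apply3 A B C T a b c = unit_tensor a b c"
    using assms unfolding restricts_to_unit_def by blast
  define v :: "nat \<Rightarrow> real^'a" where "v a = (\<chi> i. A a i)" for a
  define g :: "nat \<Rightarrow> real^'a" where "g b = (\<chi> i. \<Sum>j\<in>UNIV. \<Sum>k\<in>UNIV. B b j * C b k * T$i$j$k)" for b
  have "v a \<bullet> g b = apply3 A B C T a b b" for a b
    by (simp add: inner_vec_def v_def g_def apply3_def sum_distrib_left mult.assoc)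
  then have "v a \<bullet> g b = (if a = b then 1 else 0)" if "a \<in> {..<r}" "b \<in> {..<r}" for a b
    using ABC that by (simp add: unit_tensor_def)
  then show ?thesis
    using card_le_DIM_if_biorthogonal[of "{..<r}" v g] by simp
qed

lemma finite_restricts_to_unit: "finite {r. restricts_to_unit T r}"
  using restricts_to_unit_le_card by (metis (mono_tags) finite_nat_set_iff_bounded_le mem_Collect_eq)

lemma restricts_to_unit_0: "restricts_to_unit T 0"
  by (simp add: restricts_to_unit_def)

lemma restricts_to_unit_le_subrank: "restricts_to_unit T r \<Longrightarrow> r \<le> subrank T"
  unfolding subrank_eq_Max using finite_restricts_to_unit by (intro Max_ge) auto

lemma subrank_restricts_to_unit: "restricts_to_unit T (subrank T)"
  unfolding subrank_eq_Max using finite_restricts_to_unit restricts_to_unit_0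
  by (metis (mono_tags) Max_in empty_iff mem_Collect_eq)

lemma subrank_le_card:
  fixes T :: "real^'c::finite^'b::finite^'a::finite"
  shows "subrank T \<le> CARD('a)"
  using restricts_to_unit_le_card subrank_restricts_to_unit by blast

lemma subrank_eqI:
  "restricts_to_unit T r \<Longrightarrow> (\<And>s. restricts_to_unit T s \<Longrightarrow> s \<le> r) \<Longrightarrow> subrank T = r"
  by (meson le_antisym restricts_to_unit_le_subrank subrank_restricts_to_unit)

lemma typical_subrank_le_card:
  "typical_subrank TYPE(real^'c::finite^'b::finite^'a::finite) r \<Longrightarrow> r \<le> CARD('a)"
  unfolding typical_subrank_def by (metis ex_in_conv subrank_le_card)

(* (A (x) B (x) C) T for matrices whose rows are indexed by finite types, so that, unlike apply3,
   the result is again a tensor in a Euclidean space. *)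
definition tensor_map ::
  "(real^'a::finite^'x::finite) \<times> (real^'b::finite^'y::finite) \<times> (real^'c::finite^'z::finite)
   \<Rightarrow> real^'c^'b^'a \<Rightarrow> real^'z^'y^'x" where
  "tensor_map = (\<lambda>(A, B, C) T. \<chi> x y z. \<Sum>i\<in>UNIV. \<Sum>j\<in>UNIV. \<Sum>k\<in>UNIV.
     A$x$i * B$y$j * C$z$k * T$i$j$k)"

definition unit_tensor_vec :: "real^'r::finite^'r^'r" where
  "unit_tensor_vec = (\<chi> x y z. if x = y \<and> y = z then 1 else 0)"

lemma tensor_map_nth:
  "tensor_map (A, B, C) T $ x $ y $ z =
     (\<Sum>i\<in>UNIV. \<Sum>j\<in>UNIV. \<Sum>k\<in>UNIV. A$x$i * B$y$j * C$z$k * T$i$j$k)"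
  by (simp add: tensor_map_def)

lemma tensor_map_zero [simp]: "tensor_map p 0 = 0"
  by (simp add: tensor_map_def vec_eq_iff case_prod_beta)

lemma tensor_map_axis_nth:
  "tensor_map (\<chi> x. axis (f x) 1, \<chi> y. axis (g y) 1, C) T $ x $ y $ z
     = (\<Sum>k\<in>UNIV. C$z$k * T$f x$g y$k)"
  by (simp add: tensor_map_nth mult.assoc flip: sum_distrib_left)
    (simp add: axis_def if_distrib[of "\<lambda>u. u * _"] cong: if_cong)

lemma has_derivative_tensor_map:
  "((\<lambda>(T, A, B, C). tensor_map (A, B, C) T) has_derivative
     (\<lambda>(dT, dA, dB, dC). tensor_map (A, B, C) dT + tensor_map (dA, B, C) T
        + tensor_map (A, dB, C) T + tensor_map (A, B, dC) T)) (at (T, A, B, C))"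
  unfolding tensor_map_def case_prod_beta fst_conv snd_conv
  apply (rule has_derivative_eq_rhs)
   apply (rule has_derivative_vec_lambda)+
   apply (rule derivative_eq_intros refl)+
  apply (simp add: fun_eq_iff vec_eq_iff algebra_simps sum.distrib)
  done

lemma tensor_map_eq_unit_imp_restricts_to_unit:
  assumes "tensor_map (A, B, C) T = (unit_tensor_vec :: real^'r::finite^'r^'r)"
  shows "restricts_to_unit T CARD('r)"
proof -
  obtain h :: "nat \<Rightarrow> 'r" where h: "bij_betw h {..<CARD('r)} UNIV"
    using ex_bij_betw_nat_finite[of "UNIV :: 'r set"] by (auto simp: atLeast0LessThan)
  have "apply3 (\<lambda>a i. A$h a$i) (\<lambda>b j. B$h b$j) (\<lambda>c k. C$h c$k) T a b c = unit_tensor a b c"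
    if "a < CARD('r)" "b < CARD('r)" "c < CARD('r)" for a b c
  proof -
    have "apply3 (\<lambda>a i. A$h a$i) (\<lambda>b j. B$h b$j) (\<lambda>c k. C$h c$k) T a b c
        = unit_tensor_vec $ h a $ h b $ h c"
      by (simp add: apply3_def tensor_map_nth flip: assms)
    also have "\<dots> = unit_tensor a b c"
      using bij_betw_imp_inj_on[OF h] that
      by (auto simp: unit_tensor_vec_def unit_tensor_def dest: inj_onD)
    finally show ?thesis .
  qed
  then show ?thesis
    unfolding restricts_to_unit_def by blast
qed

lemma restricts_to_unit_near_regular_point:
  fixes T0 :: "real^'c::finite^'b::finite^'a::finite"
    and A :: "real^'a^'r::finite" and B :: "real^'b^'r" and C :: "real^'c^'r"
  assumes unit: "tensor_map (A, B, C) T0 = unit_tensor_vec"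
    and regular: "surj (\<lambda>(dA, dB, dC).
      tensor_map (dA, B, C) T0 + tensor_map (A, dB, C) T0 + tensor_map (A, B, dC) T0)"
  shows "\<exists>U. open U \<and> T0 \<in> U \<and> (\<forall>T\<in>U. restricts_to_unit T CARD('r))"
proof -
  let ?G = "\<lambda>(T, A, B, C). tensor_map (A, B, C) T"
  have "isCont ?G x" for x
    using has_derivative_continuous[OF has_derivative_tensor_map] by (cases x) auto
  then have cont: "continuous_on UNIV ?G"
    by (intro continuous_at_imp_continuous_on) blast
  have surj: "surj (\<lambda>dp. (\<lambda>(dT, dA, dB, dC). tensor_map (A, B, C) dT + tensor_map (dA, B, C) T0
      + tensor_map (A, dB, C) T0 + tensor_map (A, B, dC) T0) (0, dp))"
    using regular by (simp add: case_prod_beta)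
  have "?G (T0, A, B, C) = unit_tensor_vec"
    using unit by simp
  from solvable_near_regular_point[OF cont has_derivative_tensor_map surj this]
  obtain U where "open U" "T0 \<in> U"
    and U: "\<forall>T\<in>U. \<exists>p. ?G (T, p) = (unit_tensor_vec :: real^'r^'r^'r)"
    by blast
  moreover have "restricts_to_unit T CARD('r)" if T: "T \<in> U" for T
  proof -
    obtain A' B' C' where "tensor_map (A', B', C') T = (unit_tensor_vec :: real^'r^'r^'r)"
      using U T by auto
    then show ?thesis
      by (rule tensor_map_eq_unit_imp_restricts_to_unit)
  qed
  ultimately show ?thesis
    by blast
qed

section \<open>Subrank at least two on an open dense set\<close>

definition fibre_matrix ::
  "(2 \<Rightarrow> 'a) \<Rightarrow> (2 \<Rightarrow> 'b) \<Rightarrow> (2 \<times> 2 \<Rightarrow> 'c) \<Rightarrow> real^'c::finite^'b::finite^'a::finite \<Rightarrow> real^(2 \<times> 2)^(2 \<times> 2)"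
  where "fibre_matrix i j k T = (\<chi> p q. T $ i (fst p) $ j (snd p) $ k q)"

(* The first two factors pick the rows i x and the columns j y; the third one is obtained by
   inverting the fibre matrix. *)
lemma restricts_to_unit_2_if_invertible_fibre_matrix:
  assumes "invertible (fibre_matrix i j k T)"
  shows "restricts_to_unit T 2"
proof -
  let ?V = "fibre_matrix i j k T"
  have "surj ((*v) ?V)"
    using assms unfolding invertible_right_inverse matrix_right_invertible_surjective .
  define \<mu> where "\<mu> z = inv ((*v) ?V) (axis (z, z) 1)" for z
  have \<mu>: "?V *v \<mu> z = axis (z, z) 1" for z
    unfolding \<mu>_def using \<open>surj _\<close> by (rule surj_f_inv_f)
  define C :: "real^'c^2" where "C = (\<chi> z. \<Sum>q\<in>UNIV. \<mu> z $ q *\<^sub>R axis (k q) 1)"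
  have "tensor_map (\<chi> x. axis (i x) 1, \<chi> y. axis (j y) 1, C) T $ x $ y $ z = unit_tensor_vec $ x $ y $ z"
    for x y z
  proof -
    have "tensor_map (\<chi> x. axis (i x) 1, \<chi> y. axis (j y) 1, C) T $ x $ y $ z
        = (\<Sum>c\<in>UNIV. \<Sum>q\<in>UNIV. \<mu> z $ q * axis (k q) 1 $ c * T $ i x $ j y $ c)"
      by (simp add: tensor_map_axis_nth C_def sum_component sum_distrib_right)
    also have "\<dots> = (\<Sum>q\<in>UNIV. \<mu> z $ q * T $ i x $ j y $ k q)"
      by (subst sum.swap)
        (simp add: axis_def if_distrib[of "\<lambda>u. _ * u"] if_distrib[of "\<lambda>u. u * _"] cong: if_cong)
    also have "\<dots> = (?V *v \<mu> z) $ (x, y)"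
      by (simp add: fibre_matrix_def matrix_vector_mult_def mult.commute)
    also have "\<dots> = unit_tensor_vec $ x $ y $ z"
      by (simp add: \<mu> axis_def unit_tensor_vec_def)
    finally show ?thesis .
  qed
  then have "tensor_map (\<chi> x. axis (i x) 1, \<chi> y. axis (j y) 1, C) T = unit_tensor_vec"
    by (simp add: vec_eq_iff)
  then have "restricts_to_unit T CARD(2)"
    by (rule tensor_map_eq_unit_imp_restricts_to_unit)
  then show ?thesis
    by simp
qed

lemma open_invertible_fibre_matrix: "open {T. invertible (fibre_matrix i j k T)}"
proof -
  have "continuous_on UNIV (\<lambda>T. det (fibre_matrix i j k T))"
    unfolding det_def fibre_matrix_def by (intro continuous_intros)
  then show ?thesis
    by (simp add: invertible_det_nz open_Collect_neq continuous_on_const)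
qed

lemma invertible_fibre_matrix_dense:
  fixes T :: "real^'c::finite^'b::finite^'a::finite"
  assumes "inj i" "inj j" "inj k" and "e > 0"
  obtains T' where "dist T' T < e" "invertible (fibre_matrix i j k T')"
proof -
  define E :: "real^'c^'b^'a"
    where "E = (\<chi> a b c. if \<exists>q. a = i (fst q) \<and> b = j (snd q) \<and> c = k q then 1 else 0)"
  have shift: "fibre_matrix i j k (T + t *\<^sub>R E) = fibre_matrix i j k T + t *\<^sub>R mat 1" for t
    using assms(1-3) by (auto simp: fibre_matrix_def E_def mat_def vec_eq_iff inj_eq prod_eq_iff)
  obtain t where "0 < t" "t < e / (norm E + 1)" and inv: "invertible (fibre_matrix i j k T + t *\<^sub>R mat 1)"
    using invertible_small_shift[of "e / (norm E + 1)"] \<open>e > 0\<close>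
    by (metis add_nonneg_pos divide_pos_pos norm_ge_zero zero_less_one)
  have "dist (T + t *\<^sub>R E) T = t * norm E"
    using \<open>0 < t\<close> by (simp add: dist_norm)
  also have "\<dots> < e"
    using \<open>0 < t\<close> \<open>t < e / (norm E + 1)\<close>
    by (smt (verit, best) mult_left_mono norm_ge_zero pos_less_divide_eq mult.commute)
  finally show ?thesis
    using that inv shift by metis
qed

lemma typical_subrank_ge_2:
  assumes "2 \<le> CARD('a)" "2 \<le> CARD('b)" "4 \<le> CARD('c)"
    and "typical_subrank TYPE(real^'c::finite^'b::finite^'a::finite) r"
  shows "2 \<le> r"
proof -
  obtain U :: "(real^'c^'b^'a) set" where "open U" "U \<noteq> {}" and U: "\<forall>T\<in>U. subrank T = r"
    using assms(4) unfolding typical_subrank_def by blast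
  obtain T e where "e > 0" "ball T e \<subseteq> U"
    using \<open>open U\<close> \<open>U \<noteq> {}\<close> open_contains_ball by blast
  obtain i :: "2 \<Rightarrow> 'a" where "inj i"
    using card_le_inj[of "UNIV :: 2 set" "UNIV :: 'a set"] assms(1) by auto
  obtain j :: "2 \<Rightarrow> 'b" where "inj j"
    using card_le_inj[of "UNIV :: 2 set" "UNIV :: 'b set"] assms(2) by auto
  obtain k :: "2 \<times> 2 \<Rightarrow> 'c" where "inj k"
    using card_le_inj[of "UNIV :: (2 \<times> 2) set" "UNIV :: 'c set"] assms(3) by auto
  obtain T' where "dist T' T < e" "invertible (fibre_matrix i j k T')"
    using invertible_fibre_matrix_dense[OF \<open>inj i\<close> \<open>inj j\<close> \<open>inj k\<close> \<open>e > 0\<close>] .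
  then have "T' \<in> U" "restricts_to_unit T' 2"
    using \<open>ball T e \<subseteq> U\<close> restricts_to_unit_2_if_invertible_fibre_matrix
    by (auto simp: dist_commute)
  then show ?thesis
    using U restricts_to_unit_le_subrank by fastforce
qed

section \<open>Rank-one slice combinations\<close>

definition slice_combination :: "real^'c::finite^'b::finite^'a::finite \<Rightarrow> ('c \<Rightarrow> real) \<Rightarrow> real^'b^'a" where
  "slice_combination T w = (\<chi> i j. \<Sum>k\<in>UNIV. w k * T$i$j$k)"

lemma slice_combination_diff_le:
  fixes T S :: "real^'c::finite^'b::finite^'a::finite" and m \<delta> :: real
  assumes "\<And>i j k. \<bar>T$i$j$k - S$i$j$k\<bar> \<le> \<delta>" and "\<And>k. \<bar>w k\<bar> \<le> m"
  shows "\<bar>(slice_combination T w - slice_combination S w) $ i $ j\<bar> \<le> CARD('c) * m * \<delta>"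
proof -
  have "\<bar>(slice_combination T w - slice_combination S w) $ i $ j\<bar>
      = \<bar>\<Sum>k\<in>UNIV. w k * (T$i$j$k - S$i$j$k)\<bar>"
    by (simp add: slice_combination_def algebra_simps sum_subtractf)
  also have "\<dots> \<le> (\<Sum>k\<in>(UNIV :: 'c set). m * \<delta>)"
  proof (intro sum_abs[THEN order_trans] sum_mono)
    fix k
    have "\<bar>w k\<bar> * \<bar>T$i$j$k - S$i$j$k\<bar> \<le> m * \<delta>"
      using assms(2)[of k] by (intro mult_mono assms) auto
    then show "\<bar>w k * (T$i$j$k - S$i$j$k)\<bar> \<le> m * \<delta>"
      by (simp add: abs_mult)
  qed
  also have "\<dots> = CARD('c) * m * \<delta>"
    by simp
  finally show ?thesis .
qed

(* P and Q are invertible because P (sum N) Q = I, and then N z = P^-1 e_z e_z^T Q^-1. *)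
lemma rank_one_if_sandwich_eq_matrix_units:
  fixes P Q :: "real^'n::finite^'n" and N :: "'n \<Rightarrow> real^'n^'n"
  assumes PNQ: "\<And>z. P ** N z ** Q = (\<chi> x y. axis z 1 $ x * axis z 1 $ y)"
  obtains u v where "N z = (\<chi> i j. u$i * v$j)" "N z \<noteq> 0"
proof -
  define S where "S = (\<Sum>z\<in>UNIV. N z)"
  have "P ** S ** Q = (\<Sum>z\<in>UNIV. \<chi> x y. axis z 1 $ x * axis z 1 $ y)"
    by (simp add: S_def matrix_mul_sum_left matrix_mul_sum_right PNQ)
  also have "\<dots> = mat 1"
    by (simp add: vec_eq_iff mat_def sum_component axis_def if_distrib[of "\<lambda>u. u * _"] cong: if_cong)
  finally have PSQ: "P ** S ** Q = mat 1" .
  have SQP: "(S ** Q) ** P = mat 1"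
    using PSQ matrix_left_right_inverse by (metis matrix_mul_assoc)
  have QPS: "Q ** (P ** S) = mat 1"
    using PSQ matrix_left_right_inverse by metis
  have "N z = ((S ** Q) ** P) ** N z ** (Q ** (P ** S))"
    by (simp add: SQP QPS)
  also have "\<dots> = (S ** Q) ** (P ** N z ** Q) ** (P ** S)"
    by (simp only: matrix_mul_assoc)
  also have "\<dots> = (\<chi> i j. ((S ** Q) *v axis z 1)$i * (axis z 1 v* (P ** S))$j)"
    by (simp add: PNQ matrix_mul_outer)
  finally have "N z = (\<chi> i j. ((S ** Q) *v axis z 1)$i * (axis z 1 v* (P ** S))$j)" .
  moreover have "N z \<noteq> 0"
  proof
    assume "N z = 0"
    then have "(P ** N z ** Q) $ z $ z = 0"
      by simp
    then show False
      by (simp add: PNQ)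
  qed
  ultimately show ?thesis
    using that by blast
qed

lemma restricts_to_unit_square_imp_sandwich:
  fixes T :: "real^'c::finite^'n::finite^'n"
  assumes "restricts_to_unit T CARD('n)"
  obtains P :: "real^'n^'n" and W :: "'n \<Rightarrow> 'c \<Rightarrow> real" and Q :: "real^'n^'n"
  where "\<And>z. P ** slice_combination T (W z) ** Q = (\<chi> x y. axis z 1 $ x * axis z 1 $ y)"
proof -
  obtain A B C where ABC: "\<And>a b c. a < CARD('n) \<Longrightarrow> b < CARD('n) \<Longrightarrow> c < CARD('n) \<Longrightarrow>
      apply3 A B C T a b c = unit_tensor a b c"
    using assms unfolding restricts_to_unit_def by blast
  obtain h :: "'n \<Rightarrow> nat" where h: "bij_betw h UNIV {..<CARD('n)}"
    using ex_bij_betw_finite_nat[of "UNIV :: 'n set"] by (auto simp: atLeast0LessThan)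
  have h_lt: "h x < CARD('n)" for x
    using bij_betwE[OF h] by blast
  have h_eq: "h x = h y \<longleftrightarrow> x = y" for x y
    using bij_betw_imp_inj_on[OF h] by (auto dest: inj_onD)
  define P :: "real^'n^'n" where "P = (\<chi> x i. A (h x) i)"
  define Q :: "real^'n^'n" where "Q = (\<chi> j y. B (h y) j)"
  have "(P ** slice_combination T (C (h z)) ** Q) $ x $ y = apply3 A B C T (h x) (h y) (h z)"
    for x y z
    by (simp add: P_def Q_def slice_combination_def matrix_matrix_mult_def apply3_def
        sum_distrib_left sum_distrib_right mult_ac) (subst sum.swap, simp add: mult_ac)
  also have "\<dots> x y z = axis z 1 $ x * axis z 1 $ y" for x y z
    unfolding ABC[OF h_lt h_lt h_lt] unit_tensor_def axis_def h_eq by simp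
  finally have "P ** slice_combination T (C (h z)) ** Q = (\<chi> x y. axis z 1 $ x * axis z 1 $ y)" for z
    by (simp add: vec_eq_iff)
  then show ?thesis
    by (rule that)
qed

lemma rank_one_slice_if_restricts_to_unit:
  fixes T :: "real^'c::finite^'n::finite^'n"
  assumes "restricts_to_unit T CARD('n)"
  obtains w u v where "slice_combination T w = (\<chi> i j. u$i * v$j)" "slice_combination T w \<noteq> 0"
proof (rule restricts_to_unit_square_imp_sandwich[OF assms])
  fix P Q :: "real^'n^'n" and W :: "'n \<Rightarrow> 'c \<Rightarrow> real" and z :: 'n
  assume "\<And>z. P ** slice_combination T (W z) ** Q = (\<chi> x y. axis z 1 $ x * axis z 1 $ y)"
  then obtain u v
    where "slice_combination T (W z) = (\<chi> i j. u$i * v$j)" "slice_combination T (W z) \<noteq> 0"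
    by (rule rank_one_if_sandwich_eq_matrix_units)
  then show ?thesis
    by (rule that)
qed

section \<open>Tensors of format 3 x 3 x 5\<close>

lemma exhaust_5:
  fixes x :: 5
  shows "x = 1 \<or> x = 2 \<or> x = 3 \<or> x = 4 \<or> x = 5"
proof (induct x)
  case (of_int z)
  then have "z = 0 \<or> z = 1 \<or> z = 2 \<or> z = 3 \<or> z = 4"
    by fastforce
  then show ?case
    by auto
qed

lemma UNIV_5: "UNIV = {1, 2, 3, 4, 5::5}"
  using exhaust_5 by auto

lemma sum_5: "sum f (UNIV::5 set) = f 1 + f 2 + f 3 + f 4 + f 5"
  unfolding UNIV_5 by (simp add: ac_simps)

(* Needed because sum_3 and forall_3 produce the numeral 3, which simp does not rewrite to 0. *)
lemma numerals_mod_3: "(3 :: 3) = 0" "(4 :: 3) = 1"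
  by simp_all

(* For N = u v^T the four forms are the components of the quaternion product
   (u1 + u2 i + u3 j) (v1 + v2 i + v3 j), so quat_norm_sq N is its squared norm. *)
definition quat_norm_sq :: "real^3^3 \<Rightarrow> real" where
  "quat_norm_sq N = (N$1$1 - N$2$2 - N$3$3)\<^sup>2 + (N$1$2 + N$2$1)\<^sup>2 + (N$1$3 + N$3$1)\<^sup>2
     + (N$2$3 - N$3$2)\<^sup>2"

lemma quat_norm_sq_outer:
  "quat_norm_sq (\<chi> i j. u$i * v$j) = (\<Sum>i\<in>UNIV. \<Sum>j\<in>UNIV. (u$i * v$j)\<^sup>2)"
  unfolding quat_norm_sq_def sum_3 by simp algebra

lemma quat_norm_sq_le:
  assumes "\<And>i j. \<bar>R$i$j\<bar> \<le> \<epsilon>"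
  shows "quat_norm_sq R \<le> 21 * \<epsilon>\<^sup>2"
proof -
  have "\<epsilon> \<ge> 0"
    using assms[of 1 1] by linarith
  have bounds: "\<bar>R$1$1 - R$2$2 - R$3$3\<bar> \<le> 3 * \<epsilon>" "\<bar>R$1$2 + R$2$1\<bar> \<le> 2 * \<epsilon>"
    "\<bar>R$1$3 + R$3$1\<bar> \<le> 2 * \<epsilon>" "\<bar>R$2$3 - R$3$2\<bar> \<le> 2 * \<epsilon>"
    using assms[unfolded abs_le_iff] unfolding abs_le_iff by (smt (verit))+
  have "quat_norm_sq R \<le> (3 * \<epsilon>)\<^sup>2 + (2 * \<epsilon>)\<^sup>2 + (2 * \<epsilon>)\<^sup>2 + (2 * \<epsilon>)\<^sup>2"
    unfolding quat_norm_sq_def using bounds \<open>\<epsilon> \<ge> 0\<close>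
    by (intro add_mono; subst power2_le_iff_abs_le) auto
  also have "\<dots> = 21 * \<epsilon>\<^sup>2"
    by (simp add: power2_eq_square)
  finally show ?thesis .
qed

(* The five slices of T2 span the common kernel of the four forms in quat_norm_sq. *)
definition T2 :: "real^5^3^3" where
  "T2 = (\<chi> i j k.
     if k = 1 then (if (i, j) = (1, 2) then 1 else if (i, j) = (2, 1) then -1 else 0)
     else if k = 2 then (if (i, j) = (1, 3) then 1 else if (i, j) = (3, 1) then -1 else 0)
     else if k = 3 then (if (i, j) = (2, 3) \<or> (i, j) = (3, 2) then 1 else 0)
     else if k = 4 then (if (i, j) = (1, 1) \<or> (i, j) = (2, 2) then 1 else 0)
     else (if (i, j) = (1, 1) \<or> (i, j) = (3, 3) then 1 else 0))"

lemma quat_norm_sq_slice_T2_add: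
  "quat_norm_sq (slice_combination T2 w + R) = quat_norm_sq R"
  by (simp add: quat_norm_sq_def slice_combination_def sum_5 T2_def)

lemma slice_T2_nth:
  "slice_combination T2 w $ 1 $ 2 = w 1" "slice_combination T2 w $ 1 $ 3 = w 2"
  "slice_combination T2 w $ 2 $ 3 = w 3" "slice_combination T2 w $ 2 $ 2 = w 4"
  "slice_combination T2 w $ 3 $ 3 = w 5"
  by (simp_all add: slice_combination_def sum_5 T2_def)

lemma slice_T2_entry_eq: "\<exists>i j. \<bar>slice_combination T2 w $ i $ j\<bar> = \<bar>w k\<bar>"
  using exhaust_5[of k] slice_T2_nth by metis

lemma slice_combination_near_T2_not_rank_one:
  fixes T :: "real^5^3^3"
  assumes close: "\<And>i j k. \<bar>T$i$j$k - T2$i$j$k\<bar> \<le> 1/100"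
    and rank_one: "slice_combination T w = (\<chi> i j. u$i * v$j)"
  shows "slice_combination T w = 0"
proof -
  define m where "m = Max (range (\<lambda>k. \<bar>w k\<bar>))"
  have w_le: "\<bar>w k\<bar> \<le> m" for k
    unfolding m_def by (rule Max_ge) auto
  have "m \<in> range (\<lambda>k. \<bar>w k\<bar>)"
    unfolding m_def by (rule Max_in) auto
  then obtain k0 where "\<bar>w k0\<bar> = m"
    by auto
  define N where "N = slice_combination T w"
  define R where "R = N - slice_combination T2 w"
  have R_le: "\<bar>R$i$j\<bar> \<le> m / 20" for i j
    using slice_combination_diff_le[OF close w_le, where i=i and j=j] by (simp add: R_def N_def)
  obtain i j where "\<bar>slice_combination T2 w $ i $ j\<bar> = m"
    using slice_T2_entry_eq \<open>\<bar>w k0\<bar> = m\<close> by metis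
  moreover have "\<bar>slice_combination T2 w $ i $ j\<bar> - \<bar>N$i$j\<bar> \<le> \<bar>R$i$j\<bar>"
    unfolding R_def by (simp add: abs_triangle_ineq2_sym)
  ultimately have "19/20 * m \<le> \<bar>N$i$j\<bar>"
    using R_le[of i j] by linarith
  then have "(19/20 * m)\<^sup>2 \<le> (N$i$j)\<^sup>2"
    using w_le[of k0] by (simp add: abs_le_square_iff[symmetric])
  also have "\<dots> \<le> (\<Sum>i\<in>UNIV. \<Sum>j\<in>UNIV. (N$i$j)\<^sup>2)"
    by (intro member_le_sum[THEN order_trans[rotated]] member_le_sum[of j]) (auto intro: sum_nonneg)
  also have "\<dots> = quat_norm_sq N"
    by (simp add: N_def rank_one quat_norm_sq_outer)
  also have "\<dots> = quat_norm_sq R"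
    using quat_norm_sq_slice_T2_add[of w R] by (simp add: R_def)
  also have "\<dots> \<le> 21 * (m / 20)\<^sup>2"
    by (rule quat_norm_sq_le[OF R_le])
  finally have "m = 0"
    by (simp add: power2_eq_square) (metis antisym mult_eq_0_iff zero_le_square)
  then have "w = (\<lambda>_. 0)"
    using w_le by force
  then show ?thesis
    by (simp add: slice_combination_def vec_eq_iff)
qed

lemma not_restricts_to_unit_3_near_T2:
  fixes T :: "real^5^3^3"
  assumes "\<And>i j k. \<bar>T$i$j$k - T2$i$j$k\<bar> \<le> 1/100"
  shows "\<not> restricts_to_unit T 3"
proof
  assume "restricts_to_unit T 3"
  then obtain w u v where "slice_combination T w = (\<chi> i j. u$i * v$j)" "slice_combination T w \<noteq> 0"
    using rank_one_slice_if_restricts_to_unit[of T] by auto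
  then show False
    using slice_combination_near_T2_not_rank_one[OF assms] by blast
qed

(* k2 (x, y) is the only slice on which the fibre of T2 at (i2 x, j2 y) is nonzero. *)
definition i2 :: "2 \<Rightarrow> 3" where "i2 x = (if x = 1 then 1 else 2)"
definition j2 :: "2 \<Rightarrow> 3" where "j2 y = (if y = 1 then 2 else 3)"
definition k2 :: "2 \<times> 2 \<Rightarrow> 5" where
  "k2 p = (if p = (1, 1) then 1 else if p = (1, 2) then 2 else if p = (2, 1) then 4 else 3)"

lemma fibre_matrix_T2: "fibre_matrix i2 j2 k2 T2 = mat 1"
  unfolding vec_eq_iff split_paired_All forall_2
  by (simp add: fibre_matrix_def T2_def mat_def i2_def j2_def k2_def numerals_mod_3)

lemma typical_subrank_2: "typical_subrank TYPE(real^5^3^3) 2"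
proof -
  define U where "U = {T. invertible (fibre_matrix i2 j2 k2 T)} \<inter> ball T2 (1/100)"
  have "open U"
    by (simp add: U_def open_Int open_invertible_fibre_matrix)
  moreover have "T2 \<in> U"
    by (auto simp: U_def fibre_matrix_T2 invertible_def intro!: exI[of _ "mat 1"])
  moreover have "subrank T = 2" if "T \<in> U" for T
  proof (rule subrank_eqI)
    show "restricts_to_unit T 2"
      using that restricts_to_unit_2_if_invertible_fibre_matrix by (auto simp: U_def)
    have "dist T T2 < 1/100"
      using that by (simp add: U_def dist_commute)
    then have "\<not> restricts_to_unit T 3"
      by (intro not_restricts_to_unit_3_near_T2 order_trans[OF abs_nth3_diff_le_dist]) simp
    then show "s \<le> 2" if "restricts_to_unit T s" for s
      using that restricts_to_unit_le_card[OF that] by (cases "s = 3") auto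
  qed
  ultimately show ?thesis
    unfolding typical_subrank_def by blast
qed

definition emb3 :: "3 \<Rightarrow> 5" where
  "emb3 i = (if i = 1 then 1 else if i = 2 then 2 else 3)"

definition proj3 :: "5 \<Rightarrow> 3" where
  "proj3 k = (if k = 1 then 1 else if k = 2 then 2 else 3)"

definition T3 :: "real^5^3^3" where
  "T3 = (\<chi> i j k. if k = 4 then (if j = i + 1 then 1 else 0)
     else if k = 5 then (if i = j + 1 then 1 else 0)
     else if i = j \<and> k = emb3 i then 1 else 0)"

definition C3 :: "real^5^3" where
  "C3 = (\<chi> c. axis (emb3 c) 1)"

lemma tensor_map_T3: "tensor_map (mat 1, mat 1, C3) T3 = unit_tensor_vec"
  unfolding vec_eq_iff forall_3
  by (simp add: tensor_map_nth sum_3 sum_5 T3_def C3_def mat_def emb3_def axis_def unit_tensor_vec_def)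

lemma T3_derivative_nth:
  "(tensor_map (dA, mat 1, C3) T3 + tensor_map (mat 1, dB, C3) T3 + tensor_map (mat 1, mat 1, dC) T3)
     $ a $ b $ c
   = dA$a$c * (if b = c then 1 else 0) + dB$b$c * (if a = c then 1 else 0)
     + (\<Sum>k\<in>UNIV. dC$c$k * T3$a$b$k)"
  using exhaust_3[of a] exhaust_3[of b] exhaust_3[of c]
  by (auto simp: tensor_map_nth sum_3 sum_5 T3_def C3_def mat_def emb3_def axis_def numerals_mod_3)

(* dC produces the diagonal entries off (c, c) and the two off-diagonal entries outside row and
   column c of each slice c; dA and dB then fill in column and row c. *)
lemma T3_regular:
  "surj (\<lambda>(dA, dB, dC).
     tensor_map (dA, mat 1, C3) T3 + tensor_map (mat 1, dB, C3) T3 + tensor_map (mat 1, mat 1, dC) T3)"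
  unfolding surj_def
proof
  fix Z :: "real^3^3^3"
  define dC :: "real^5^3" where "dC = (\<chi> c k.
    if k = 4 then Z$(c + 1)$(c + 2)$c else if k = 5 then Z$(c + 2)$(c + 1)$c
    else if proj3 k = c then 0 else Z$proj3 k$proj3 k$c)"
  define dA :: "real^3^3" where "dA = (\<chi> a c. if a = c then Z$c$c$c
    else Z$a$c$c - dC$c$4 * (if c = a + 1 then 1 else 0) - dC$c$5 * (if a = c + 1 then 1 else 0))"
  define dB :: "real^3^3" where "dB = (\<chi> b c. if b = c then 0
    else Z$c$b$c - dC$c$4 * (if b = c + 1 then 1 else 0) - dC$c$5 * (if c = b + 1 then 1 else 0))"
  have "tensor_map (dA, mat 1, C3) T3 + tensor_map (mat 1, dB, C3) T3 + tensor_map (mat 1, mat 1, dC) T3 = Z"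
    unfolding vec_eq_iff forall_3 T3_derivative_nth
    by (simp add: sum_5 T3_def dA_def dB_def dC_def proj3_def emb3_def numerals_mod_3)
  then show "\<exists>p. Z = (case p of (dA, dB, dC) \<Rightarrow>
      tensor_map (dA, mat 1, C3) T3 + tensor_map (mat 1, dB, C3) T3 + tensor_map (mat 1, mat 1, dC) T3)"
    by (metis case_prod_conv)
qed

lemma typical_subrank_3: "typical_subrank TYPE(real^5^3^3) 3"
proof -
  obtain U where "open U" "T3 \<in> U" and U: "\<forall>T\<in>U. restricts_to_unit T CARD(3)"
    using restricts_to_unit_near_regular_point[OF tensor_map_T3 T3_regular] by blast
  have "subrank T = 3" if "T \<in> U" for T :: "real^5^3^3"
  proof (rule subrank_eqI)
    show "restricts_to_unit T 3"
      using U that by simp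
    show "s \<le> 3" if "restricts_to_unit T s" for s
      using restricts_to_unit_le_card[OF that] by simp
  qed
  then show ?thesis
    unfolding typical_subrank_def using \<open>open U\<close> \<open>T3 \<in> U\<close> by blast
qed

theorem theorem4p10:
  shows "{r. typical_subrank TYPE(real^5^3^3) r} = {2, 3}"
proof (intro set_eqI iffI)
  fix r
  assume "r \<in> {r. typical_subrank TYPE(real^5^3^3) r}"
  then have "2 \<le> r" "r \<le> 3"
    using typical_subrank_ge_2[where 'a=3 and 'b=3 and 'c=5, of r]
      typical_subrank_le_card[where 'a=3 and 'b=3 and 'c=5, of r] by auto
  then show "r \<in> {2, 3}"
    by auto
next
  fix r :: nat
  assume "r \<in> {2, 3}"
  then show "r \<in> {r. typical_subrank TYPE(real^5^3^3) r}"
    using typical_subrank_2 typical_subrank_3 by auto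
qed

end
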